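(* Let $U$ and $V$ be unitary matrices of sizes $N\times N$ and $M\times M$ with no zero entries. Then (a) $\mathbb V_U(1)\otimes\mathbb V_V(1)\subset\mathbb V_{U\otimes V}(1)$, where the left side is the complex span of all $F\otimes G$ with $F\in\mathbb V_U(1)$, $G\in\mathbb V_V(1)$; (b) $i\cdot(\mathrm{Im}\,\mathbb V_U(1)\otimes\mathrm{Im}\,\mathbb V_V(1))\subset\mathrm{Im}\,\mathbb V_{U\otimes V}(1)$, where $\mathrm{Im}\,\mathbb V_U(1)\otimes\mathrm{Im}\,\mathbb V_V(1)$ is the real span of all $F\otimes G$ with $F\in\mathrm{Im}\,\mathbb V_U(1)$, $G\in\mathrm{Im}\,\mathbb V_V(1)$; (c) $\mathbf D(U)\cdot\mathbf D(V)\le\mathbf D(U\otimes V)$. The same holds for more than two factors, where in (b) the multiplier $i$ is replaced by $1$ when the number of factors is odd.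
   Context: $\circ$ is the entrywise product, $\otimes$ the Kronecker product. For unitary $W$ with no zero entries: $\mathcal C_W(F)=(F\circ W)W^*$, $\mathcal D_W(F)=W(\overline F\circ W)^*$, $\mathcal I_W=\mathcal C_W^{-1}\mathcal D_W$; $\mathbb V_W(1)$ is the complex eigenspace of $\mathcal I_W$ for eigenvalue $1$, and $\mathrm{Im}\,\mathbb V_W(1)$ is the real space of its purely imaginary elements. The undephased defect $\mathbf D(W)$ is $\dim_{\mathbb R}\{iR\circ W:\ R\text{ real},\ (iR\circ W)W^*\text{ antihermitian}\}$, which equals $\dim_{\mathbb C}\mathbb V_W(1)=\dim_{\mathbb R}\mathrm{Im}\,\mathbb V_W(1)$. *)

theory Defs
  imports Complex_Main "HOL-Library.Function_Algebras"
begin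

text \<open>Square complex matrices of size n are modelled as functions nat => nat => complex
  that vanish outside the index range {0..<n} x {0..<n}.\<close>

type_synonym cmat = "nat \<Rightarrow> nat \<Rightarrow> complex"

definition sqmats :: "nat \<Rightarrow> cmat set" where
  "sqmats n = {A. \<forall>i j. (n \<le> i \<or> n \<le> j) \<longrightarrow> A i j = 0}"

definition idm :: "nat \<Rightarrow> cmat" where
  "idm n = (\<lambda>i j. if i = j \<and> i < n then 1 else 0)"

definition mmult :: "nat \<Rightarrow> cmat \<Rightarrow> cmat \<Rightarrow> cmat" where
  "mmult n A B = (\<lambda>i j. if i < n \<and> j < n then (\<Sum>k<n. A i k * B k j) else 0)"

definition adj :: "cmat \<Rightarrow> cmat" where
  "adj A = (\<lambda>i j. cnj (A j i))"

definition cconj :: "cmat \<Rightarrow> cmat" where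
  "cconj A = (\<lambda>i j. cnj (A i j))"

definition had :: "cmat \<Rightarrow> cmat \<Rightarrow> cmat" where
  "had A B = (\<lambda>i j. A i j * B i j)"

text \<open>Kronecker product; m is the size of the second factor\<close>
definition kron :: "nat \<Rightarrow> cmat \<Rightarrow> cmat \<Rightarrow> cmat" where
  "kron m A B = (\<lambda>i j. A (i div m) (j div m) * B (i mod m) (j mod m))"

definition unitary :: "nat \<Rightarrow> cmat \<Rightarrow> bool" where
  "unitary n W \<longleftrightarrow> W \<in> sqmats n \<and> mmult n W (adj W) = idm n \<and> mmult n (adj W) W = idm n"

definition no_zero_entries :: "nat \<Rightarrow> cmat \<Rightarrow> bool" where
  "no_zero_entries n W \<longleftrightarrow> (\<forall>i<n. \<forall>j<n. W i j \<noteq> 0)"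

definition antihermitian :: "cmat \<Rightarrow> bool" where
  "antihermitian A \<longleftrightarrow> adj A = - A"

definition rscale :: "real \<Rightarrow> cmat \<Rightarrow> cmat" where
  "rscale r A = (\<lambda>i j. complex_of_real r * A i j)"

definition cscale :: "complex \<Rightarrow> cmat \<Rightarrow> cmat" where
  "cscale c A = (\<lambda>i j. c * A i j)"

definition CW :: "nat \<Rightarrow> cmat \<Rightarrow> cmat \<Rightarrow> cmat" where
  "CW n W F = mmult n (had F W) (adj W)"

definition DW :: "nat \<Rightarrow> cmat \<Rightarrow> cmat \<Rightarrow> cmat" where
  "DW n W F = mmult n W (adj (had (cconj F) W))"

definition IW :: "nat \<Rightarrow> cmat \<Rightarrow> cmat \<Rightarrow> cmat" where
  "IW n W F = inv_into (sqmats n) (CW n W) (DW n W F)"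

definition V1 :: "nat \<Rightarrow> cmat \<Rightarrow> cmat set" where
  "V1 n W = {F \<in> sqmats n. IW n W F = F}"

definition ImV1 :: "nat \<Rightarrow> cmat \<Rightarrow> cmat set" where
  "ImV1 n W = {F \<in> V1 n W. \<forall>i j. Re (F i j) = 0}"

text \<open>undephased defect: real dimension of {iR o W : R real, (iR o W) W^* antihermitian}\<close>
definition defect :: "nat \<Rightarrow> cmat \<Rightarrow> nat" where
  "defect n W = vector_space.dim rscale
     {had (\<lambda>i j. \<i> * complex_of_real (R i j)) W | R :: nat \<Rightarrow> nat \<Rightarrow> real.
        antihermitian (mmult n (had (\<lambda>i j. \<i> * complex_of_real (R i j)) W) (adj W))}"

fun ksize :: "(nat \<times> cmat) list \<Rightarrow> nat" where
  "ksize [] = 1"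
| "ksize (p # ps) = fst p * ksize ps"

fun kmat :: "(nat \<times> cmat) list \<Rightarrow> cmat" where
  "kmat [] = idm 1"
| "kmat (p # ps) = kron (ksize ps) (snd p) (kmat ps)"

end

theory Submission
  imports Defs
begin

text \<open>Since \<open>\<C>\<^sub>W\<close> is a bijection when \<open>W\<close> is unitary without zero entries, \<open>\<V>\<^sub>W(1)\<close> is the
  solution space of the linear equation \<open>\<D>\<^sub>W(F) = \<C>\<^sub>W(F)\<close>.  Both sides are built from entrywise
  products, matrix products, adjoints and conjugates, all of which are multiplicative for the
  Kronecker product; hence \<open>F \<otimes> G\<close> solves the equation for \<open>U \<otimes> V\<close> whenever \<open>F\<close>, \<open>G\<close> solve it
  for \<open>U\<close>, \<open>V\<close>, which gives (a).  A product of two purely imaginary numbers is real, which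
  explains the factor \<open>\<i>\<close> in (b).  For (c), take bases of the two defect spaces: the matrices
  \<open>\<i>(X \<otimes> Y)\<close> lie in the defect space of \<open>U \<otimes> V\<close>, and they are linearly independent over \<open>\<real>\<close>
  because every entry \<open>X\<^sub>a\<^sub>b\<close> of an element of the defect space of \<open>U\<close> lies on the fixed real line
  \<open>\<i>\<real> U\<^sub>a\<^sub>b\<close>.\<close>

interpretation cspace: module cscale
  by unfold_locales (auto simp: cscale_def fun_eq_iff algebra_simps)

interpretation rspace: vector_space rscale
  by unfold_locales (auto simp: rscale_def fun_eq_iff algebra_simps)

lemma sum_fun_apply: "(sum f A) i j = (\<Sum>x\<in>A. f x i j)" for f :: "'a \<Rightarrow> cmat"
  by (induct A rule: infinite_finite_induct) auto

lemma sum_lessThan_mult: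
  "(\<Sum>k<N * M. f k) = (\<Sum>a<N. \<Sum>b<M. f (a * M + b))" for f :: "nat \<Rightarrow> 'a::comm_monoid_add"
proof -
  have "sum f {a * M..<a * M + M} = (\<Sum>b<M. f (a * M + b))" for a
    using sum.shift_bounds_nat_ivl[of f 0 "a * M" M] by (simp add: lessThan_atLeast0 add.commute)
  then show ?thesis
    by (simp add: sum.nat_group[symmetric])
qed

lemma independent_scalars_zero:
  assumes "finite S" "rspace.independent S" "(\<Sum>v\<in>S. rscale (u v) v) = 0" "v \<in> S"
  shows "u v = 0"
  using assms rspace.dependent_finite by blast

lemma independent_image_if_scalars_zero:
  assumes "finite A"
    and scalars_zero: "\<And>c p. (\<Sum>q\<in>A. rscale (c q) (\<phi> q)) = 0 \<Longrightarrow> p \<in> A \<Longrightarrow> c p = 0"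
  shows "inj_on \<phi> A" "rspace.independent (\<phi> ` A)"
proof -
  show inj: "inj_on \<phi> A"
  proof (rule inj_onI, rule ccontr)
    fix p q assume "p \<in> A" "q \<in> A" "\<phi> p = \<phi> q" "p \<noteq> q"
    define c where "c r = (if r = p then 1 else 0) - (if r = q then 1 else (0::real))" for r
    have "(\<Sum>r\<in>A. rscale (c r) (\<phi> r))
        = (\<Sum>r\<in>A. if r = p then \<phi> r else 0) - (\<Sum>r\<in>A. if r = q then \<phi> r else 0)"
      unfolding c_def rspace.scale_left_diff_distrib sum_subtractf
      by (intro arg_cong2[where f = "(-)"] sum.cong refl) auto
    also have "\<dots> = 0"
      using \<open>p \<in> A\<close> \<open>q \<in> A\<close> \<open>\<phi> p = \<phi> q\<close> assms(1) by simp
    finally have "c p = 0"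
      using scalars_zero \<open>p \<in> A\<close> by blast
    then show False
      using \<open>p \<noteq> q\<close> by (simp add: c_def)
  qed
  show "rspace.independent (\<phi> ` A)"
  proof (rule rspace.independent_if_scalars_zero)
    fix f x assume "(\<Sum>x\<in>\<phi> ` A. rscale (f x) x) = 0" "x \<in> \<phi> ` A"
    then show "f x = 0"
      using scalars_zero[of "f \<circ> \<phi>"] by (auto simp: sum.reindex[OF inj])
  qed (simp add: assms(1))
qed

subsection \<open>Square matrices\<close>

lemma sqmatsD: "A \<in> sqmats n \<Longrightarrow> n \<le> i \<or> n \<le> j \<Longrightarrow> A i j = 0"
  by (auto simp: sqmats_def)

lemma sqmats_0: "sqmats 0 = {0}"
  by (auto simp: sqmats_def fun_eq_iff)

lemma mmult_sqmats [simp]: "mmult n A B \<in> sqmats n"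
  by (simp add: sqmats_def mmult_def)

lemma had_sqmats: "W \<in> sqmats n \<Longrightarrow> had F W \<in> sqmats n"
  by (simp add: sqmats_def had_def)

lemma adj_sqmats: "A \<in> sqmats n \<Longrightarrow> adj A \<in> sqmats n"
  by (auto simp: sqmats_def adj_def)

lemma cscale_sqmats: "A \<in> sqmats n \<Longrightarrow> cscale c A \<in> sqmats n"
  by (simp add: sqmats_def cscale_def)

lemma mmult_assoc: "mmult n (mmult n A B) C = mmult n A (mmult n B C)"
  unfolding mmult_def fun_eq_iff
  by (auto simp: sum_distrib_left sum_distrib_right mult.assoc intro: sum.swap)

lemma mmult_idm_right: "A \<in> sqmats n \<Longrightarrow> mmult n A (idm n) = A"
  unfolding mmult_def idm_def fun_eq_iff
  by (auto simp: sqmats_def if_distrib cong: if_cong)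

lemma mmult_cscale_left: "mmult n (cscale c A) B = cscale c (mmult n A B)"
  by (auto simp: mmult_def cscale_def fun_eq_iff sum_distrib_left mult.assoc)

lemma mmult_cscale_right: "mmult n A (cscale c B) = cscale c (mmult n A B)"
  by (auto simp: mmult_def cscale_def fun_eq_iff sum_distrib_left mult.left_commute)

lemma mmult_add_left: "mmult n (A + A') B = mmult n A B + mmult n A' B"
  by (auto simp: mmult_def fun_eq_iff sum.distrib algebra_simps)

lemma mmult_add_right: "mmult n A (B + B') = mmult n A B + mmult n A B'"
  by (auto simp: mmult_def fun_eq_iff sum.distrib algebra_simps)

lemma had_add: "had (F + G) W = had F W + had G W"
  by (simp add: had_def fun_eq_iff algebra_simps)

lemma had_cscale: "had (cscale c F) W = cscale c (had F W)"
  by (simp add: had_def cscale_def fun_eq_iff)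

lemma adj_add: "adj (A + B) = adj A + adj B"
  by (simp add: adj_def fun_eq_iff)

lemma adj_cscale: "adj (cscale c A) = cscale (cnj c) (adj A)"
  by (simp add: adj_def cscale_def fun_eq_iff)

lemma cconj_add: "cconj (A + B) = cconj A + cconj B"
  by (simp add: cconj_def fun_eq_iff)

lemma cconj_cscale: "cconj (cscale c A) = cscale (cnj c) (cconj A)"
  by (simp add: cconj_def cscale_def fun_eq_iff)

subsection \<open>Kronecker products\<close>

lemma kron_entry: "b < M \<Longrightarrow> d < M \<Longrightarrow> kron M A B (a * M + b) (c * M + d) = A a c * B b d"
  by (simp add: kron_def)

lemma kron_sqmats: "A \<in> sqmats N \<Longrightarrow> B \<in> sqmats M \<Longrightarrow> kron M A B \<in> sqmats (N * M)"
  by (cases "M = 0")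
    (auto simp: sqmats_0 kron_def sqmats_def less_eq_div_iff_mult_less_eq)

lemma kron_adj: "adj (kron M A B) = kron M (adj A) (adj B)"
  by (simp add: kron_def adj_def fun_eq_iff)

lemma kron_cconj: "cconj (kron M A B) = kron M (cconj A) (cconj B)"
  by (simp add: kron_def cconj_def fun_eq_iff)

lemma kron_had: "had (kron M A B) (kron M C D) = kron M (had A C) (had B D)"
  by (simp add: kron_def had_def fun_eq_iff)

lemma kron_mmult:
  assumes "B \<in> sqmats M" "D \<in> sqmats M"
  shows "mmult (N * M) (kron M A B) (kron M C D) = kron M (mmult N A C) (mmult M B D)"
proof (cases "M = 0")
  case True
  then show ?thesis
    using assms by (simp add: sqmats_0 mmult_def kron_def fun_eq_iff)
next
  case False
  show ?thesis
  proof (intro ext)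
    fix i j
    show "mmult (N * M) (kron M A B) (kron M C D) i j = kron M (mmult N A C) (mmult M B D) i j"
    proof (cases "i < N * M \<and> j < N * M")
      case True
      then have "i div M < N" "j div M < N"
        by (simp_all add: less_mult_imp_div_less)
      have "mmult (N * M) (kron M A B) (kron M C D) i j
          = (\<Sum>a<N. \<Sum>b<M. kron M A B i (a * M + b) * kron M C D (a * M + b) j)"
        using True by (simp add: mmult_def sum_lessThan_mult)
      also have "\<dots> = (\<Sum>a<N. \<Sum>b<M. A (i div M) a * C a (j div M) * (B (i mod M) b * D b (j mod M)))"
        by (intro sum.cong refl) (simp add: kron_def algebra_simps)
      also have "\<dots> = (\<Sum>a<N. A (i div M) a * C a (j div M)) * (\<Sum>b<M. B (i mod M) b * D b (j mod M))"
        by (simp add: sum_product)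
      also have "\<dots> = kron M (mmult N A C) (mmult M B D) i j"
        using \<open>i div M < N\<close> \<open>j div M < N\<close> False by (simp add: kron_def mmult_def)
      finally show ?thesis .
    next
      case False
      then have "N \<le> i div M \<or> N \<le> j div M"
        using \<open>M \<noteq> 0\<close> by (auto simp: less_eq_div_iff_mult_less_eq)
      then show ?thesis
        using False by (auto simp: kron_def mmult_def)
    qed
  qed
qed

lemma kron_idm: "0 < M \<Longrightarrow> kron M (idm N) (idm M) = idm (N * M)"
  unfolding kron_def idm_def fun_eq_iff
  by (auto simp: div_less_iff_less_mult) (metis div_mult_mod_eq)

lemma unitary_kron:
  assumes "unitary N U" "unitary M V"
  shows "unitary (N * M) (kron M U V)"
proof (cases "M = 0")
  case True
  then show ?thesis
    using assms by (simp add: unitary_def sqmats_0 sqmats_def mmult_def idm_def kron_def)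
next
  case False
  then show ?thesis
    using assms adj_sqmats by (simp add: unitary_def kron_sqmats kron_adj kron_mmult kron_idm)
qed

lemma no_zero_entries_kron:
  "no_zero_entries N U \<Longrightarrow> no_zero_entries M V \<Longrightarrow> no_zero_entries (N * M) (kron M U V)"
  by (cases "M = 0") (auto simp: no_zero_entries_def kron_def less_mult_imp_div_less)

subsection \<open>The eigenspace \<open>\<V>\<^sub>W(1)\<close>\<close>

lemma CW_inj_on:
  assumes "unitary n W" "no_zero_entries n W"
  shows "inj_on (CW n W) (sqmats n)"
proof
  fix F G assume F: "F \<in> sqmats n" and G: "G \<in> sqmats n" and eq: "CW n W F = CW n W G"
  have "mmult n (CW n W H) W = had H W" for H
    using assms(1) had_sqmats by (simp add: unitary_def CW_def mmult_assoc mmult_idm_right)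
  then have "had F W = had G W"
    using eq by metis
  then show "F = G"
    using assms(2) F G
    by (auto simp: fun_eq_iff had_def no_zero_entries_def sqmats_def) (metis linorder_not_le)
qed

lemma CW_surj_on:
  assumes "unitary n W" "no_zero_entries n W" "Y \<in> sqmats n"
  shows "Y \<in> CW n W ` sqmats n"
proof -
  \<comment> \<open>\<open>F \<circ> W = Y W\<close>, hence \<open>\<C>\<^sub>W F = Y W W\<^sup>* = Y\<close>.\<close>
  define F where "F = (\<lambda>i j. if i < n \<and> j < n then mmult n Y W i j / W i j else 0)"
  have "had F W = mmult n Y W"
    using assms(2) by (auto simp: fun_eq_iff had_def F_def no_zero_entries_def mmult_def)
  then have "CW n W F = Y"
    using assms by (simp add: CW_def unitary_def mmult_assoc mmult_idm_right)
  moreover have "F \<in> sqmats n"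
    by (simp add: F_def sqmats_def)
  ultimately show ?thesis
    by blast
qed

lemma V1_iff:
  assumes "unitary n W" "no_zero_entries n W"
  shows "F \<in> V1 n W \<longleftrightarrow> F \<in> sqmats n \<and> DW n W F = CW n W F"
proof -
  have "CW n W (inv_into (sqmats n) (CW n W) (DW n W F)) = DW n W F"
    using CW_surj_on[OF assms] by (simp add: DW_def f_inv_into_f)
  then show ?thesis
    using inv_into_f_f[OF CW_inj_on[OF assms]] by (auto simp: V1_def IW_def)
qed

lemma subspace_V1:
  assumes "unitary n W" "no_zero_entries n W"
  shows "cspace.subspace (V1 n W)"
proof (rule cspace.subspaceI)
  show "0 \<in> V1 n W"
    by (simp add: V1_iff[OF assms] sqmats_def CW_def DW_def mmult_def had_def cconj_def adj_def fun_eq_iff)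
next
  fix F G assume "F \<in> V1 n W" "G \<in> V1 n W"
  then show "F + G \<in> V1 n W"
    by (auto simp: V1_iff[OF assms] sqmats_def CW_def DW_def had_add cconj_add adj_add
        mmult_add_left mmult_add_right)
next
  fix c F assume "F \<in> V1 n W"
  then show "cscale c F \<in> V1 n W"
    by (auto simp: V1_iff[OF assms] cscale_sqmats CW_def DW_def had_cscale cconj_cscale adj_cscale
        mmult_cscale_left mmult_cscale_right)
qed

lemma kron_in_V1:
  assumes U: "unitary N U" "no_zero_entries N U" and V: "unitary M V" "no_zero_entries M V"
    and "F \<in> V1 N U" "G \<in> V1 M V"
  shows "kron M F G \<in> V1 (N * M) (kron M U V)"
proof -
  have "V \<in> sqmats M"
    using V by (simp add: unitary_def)
  then have "CW (N * M) (kron M U V) (kron M F G) = kron M (CW N U F) (CW M V G)"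
    and "DW (N * M) (kron M U V) (kron M F G) = kron M (DW N U F) (DW M V G)"
    by (simp_all add: CW_def DW_def kron_had kron_adj kron_cconj kron_mmult had_sqmats adj_sqmats)
  then show ?thesis
    using assms unitary_kron no_zero_entries_kron kron_sqmats by (simp add: V1_iff)
qed

lemma subspace_cscale_preimage_ImV1:
  assumes "unitary n W" "no_zero_entries n W"
  shows "rspace.subspace {X. cscale c X \<in> ImV1 n W}"
proof (rule rspace.subspaceI)
  show "0 \<in> {X. cscale c X \<in> ImV1 n W}"
    using cspace.subspace_0[OF subspace_V1[OF assms]] by (simp add: ImV1_def)
next
  fix X Y assume "X \<in> {X. cscale c X \<in> ImV1 n W}" "Y \<in> {X. cscale c X \<in> ImV1 n W}"
  then show "X + Y \<in> {X. cscale c X \<in> ImV1 n W}"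
    using cspace.subspace_add[OF subspace_V1[OF assms]]
    by (simp add: ImV1_def cspace.scale_right_distrib)
next
  fix r X assume X: "X \<in> {X. cscale c X \<in> ImV1 n W}"
  have "cscale c (rscale r X) = cscale (complex_of_real r) (cscale c X)"
    by (simp add: cscale_def rscale_def fun_eq_iff mult.left_commute)
  moreover have "cscale (complex_of_real r) (cscale c X) \<in> ImV1 n W"
    using X cspace.subspace_scale[OF subspace_V1[OF assms]] by (auto simp: ImV1_def cscale_def)
  ultimately show "rscale r X \<in> {X. cscale c X \<in> ImV1 n W}"
    by simp
qed

lemma span_in_ImV1:
  assumes "unitary n W" "no_zero_entries n W"
    and "\<And>X. X \<in> S \<Longrightarrow> X \<in> V1 n W \<and> (\<forall>i j. Re (c * X i j) = 0)"
  shows "cscale c ` rspace.span S \<subseteq> ImV1 n W"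
proof -
  have "S \<subseteq> {X. cscale c X \<in> ImV1 n W}"
    using assms cspace.subspace_scale[OF subspace_V1[OF assms(1,2)]]
    by (auto simp: ImV1_def cscale_def)
  then show ?thesis
    using rspace.span_minimal[OF _ subspace_cscale_preimage_ImV1[OF assms(1,2)]] by blast
qed

lemma span_kron_subset_V1:
  assumes "unitary N U" "no_zero_entries N U" "unitary M V" "no_zero_entries M V"
  shows "cspace.span {kron M F G | F G. F \<in> V1 N U \<and> G \<in> V1 M V} \<subseteq> V1 (N * M) (kron M U V)"
  using assms unitary_kron no_zero_entries_kron
  by (intro cspace.span_minimal) (auto intro: kron_in_V1 subspace_V1)

lemma span_kron_subset_ImV1:
  assumes "unitary N U" "no_zero_entries N U" "unitary M V" "no_zero_entries M V"
  shows "cscale \<i> ` rspace.span {kron M F G | F G. F \<in> ImV1 N U \<and> G \<in> ImV1 M V}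
    \<subseteq> ImV1 (N * M) (kron M U V)"
proof (intro span_in_ImV1 unitary_kron no_zero_entries_kron assms)
  fix X assume "X \<in> {kron M F G | F G. F \<in> ImV1 N U \<and> G \<in> ImV1 M V}"
  then obtain F G where "X = kron M F G" "F \<in> ImV1 N U" "G \<in> ImV1 M V"
    by blast
  moreover from this have "kron M F G \<in> V1 (N * M) (kron M U V)"
    using kron_in_V1[OF assms] by (simp add: ImV1_def)
  ultimately show "X \<in> V1 (N * M) (kron M U V) \<and> (\<forall>i j. Re (\<i> * X i j) = 0)"
    by (simp add: ImV1_def kron_def)
qed

subsection \<open>The defect\<close>

definition defect_space :: "nat \<Rightarrow> cmat \<Rightarrow> cmat set" where
  "defect_space n W = {had (\<lambda>i j. \<i> * complex_of_real (R i j)) W | R :: nat \<Rightarrow> nat \<Rightarrow> real.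
     antihermitian (mmult n (had (\<lambda>i j. \<i> * complex_of_real (R i j)) W) (adj W))}"

lemma defect_eq_dim: "defect n W = rspace.dim (defect_space n W)"
  by (simp add: defect_def defect_space_def)

lemma defect_space_subset_sqmats: "W \<in> sqmats n \<Longrightarrow> defect_space n W \<subseteq> sqmats n"
  by (auto simp: defect_space_def had_sqmats)

definition unit_matrix :: "nat \<Rightarrow> nat \<Rightarrow> complex \<Rightarrow> cmat" where
  "unit_matrix i j c = (\<lambda>a b. if a = i \<and> b = j then c else 0)"

definition unit_matrices :: "nat \<Rightarrow> cmat set" where
  "unit_matrices n = (\<lambda>(i, j, c). unit_matrix i j c) ` ({..<n} \<times> {..<n} \<times> {1, \<i>})"

lemma finite_unit_matrices: "finite (unit_matrices n)"
  by (simp add: unit_matrices_def)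

lemma sqmats_subset_span_unit_matrices: "sqmats n \<subseteq> rspace.span (unit_matrices n)"
proof
  fix X assume X: "X \<in> sqmats n"
  have eq: "X = (\<Sum>(i, j)\<in>{..<n} \<times> {..<n}.
      rscale (Re (X i j)) (unit_matrix i j 1) + rscale (Im (X i j)) (unit_matrix i j \<i>))"
  proof (intro ext)
    fix a b
    have entry: "rscale (Re z) (unit_matrix i j 1) a b + rscale (Im z) (unit_matrix i j \<i>) a b
        = (if (i, j) = (a, b) then z else 0)" for z i j
      by (simp add: rscale_def unit_matrix_def complex_eq_iff)
    have "X a b = (\<Sum>p\<in>{..<n} \<times> {..<n}. if p = (a, b) then X a b else 0)"
      using X by (auto simp: sqmatsD)
    also have "\<dots> = (\<Sum>(i, j)\<in>{..<n} \<times> {..<n}.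
        rscale (Re (X i j)) (unit_matrix i j 1) + rscale (Im (X i j)) (unit_matrix i j \<i>)) a b"
      unfolding sum_fun_apply by (intro sum.cong refl) (clarsimp simp: entry split: if_split_asm)
    finally show "X a b = \<dots>" .
  qed
  have "unit_matrix i j c \<in> unit_matrices n" if "i < n" "j < n" "c \<in> {1, \<i>}" for i j c
    using that unfolding unit_matrices_def by (intro image_eqI[where x = "(i, j, c)"]) auto
  then have "(case p of (i, j) \<Rightarrow>
      rscale (Re (X i j)) (unit_matrix i j 1) + rscale (Im (X i j)) (unit_matrix i j \<i>))
      \<in> rspace.span (unit_matrices n)" if "p \<in> {..<n} \<times> {..<n}" for p
    using that by (clarsimp, intro rspace.span_add rspace.span_scale rspace.span_base) auto
  then show "X \<in> rspace.span (unit_matrices n)"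
    by (subst eq) (rule rspace.span_sum)
qed

lemma finite_basis_in_sqmats:
  assumes "S \<subseteq> sqmats n"
  obtains B where "finite B" "B \<subseteq> S" "rspace.independent B" "S \<subseteq> rspace.span B"
    "card B = rspace.dim S"
proof -
  obtain B where B: "B \<subseteq> S" "rspace.independent B" "S \<subseteq> rspace.span B" "card B = rspace.dim S"
    by (rule rspace.basis_exists)
  have "B \<subseteq> rspace.span (unit_matrices n)"
    using B(1) assms sqmats_subset_span_unit_matrices by blast
  then have "finite B"
    using rspace.independent_span_bound[OF finite_unit_matrices B(2)] by blast
  with B that show ?thesis
    by blast
qed

lemma card_le_dim_in_sqmats:
  assumes "S \<subseteq> sqmats n" "rspace.independent C" "C \<subseteq> S"
  shows "card C \<le> rspace.dim S"
proof -
  obtain B where "finite B" "S \<subseteq> rspace.span B" "card B = rspace.dim S"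
    using finite_basis_in_sqmats[OF assms(1)] by metis
  moreover have "C \<subseteq> rspace.span B"
    using assms(3) \<open>S \<subseteq> rspace.span B\<close> by blast
  ultimately show ?thesis
    using rspace.independent_span_bound[of B C] assms(2) by simp
qed

lemma kron_combination_zero_blocks:
  assumes "BV \<subseteq> sqmats M" and "(\<Sum>p\<in>BU \<times> BV. rscale (c p) (kron M (fst p) (snd p))) = 0"
  shows "(\<Sum>y\<in>BV. cscale (\<Sum>x\<in>BU. complex_of_real (c (x, y)) * x a b) y) = 0"
proof (intro ext)
  fix a' b'
  show "(\<Sum>y\<in>BV. cscale (\<Sum>x\<in>BU. complex_of_real (c (x, y)) * x a b) y) a' b' = 0 a' b'"
  proof (cases "a' < M \<and> b' < M")
    case True
    have "(\<Sum>y\<in>BV. cscale (\<Sum>x\<in>BU. complex_of_real (c (x, y)) * x a b) y) a' b'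
        = (\<Sum>y\<in>BV. \<Sum>x\<in>BU. complex_of_real (c (x, y)) * (x a b * y a' b'))"
      by (simp add: sum_fun_apply cscale_def sum_distrib_right mult.assoc)
    also have "\<dots> = (\<Sum>x\<in>BU. \<Sum>y\<in>BV. complex_of_real (c (x, y)) * (x a b * y a' b'))"
      by (rule sum.swap)
    also have "\<dots> = (\<Sum>p\<in>BU \<times> BV. complex_of_real (c p) * (fst p a b * snd p a' b'))"
      by (simp add: sum.cartesian_product split_def)
    also have "\<dots> = (\<Sum>p\<in>BU \<times> BV. rscale (c p) (kron M (fst p) (snd p))) (a * M + a') (b * M + b')"
      using True by (simp add: sum_fun_apply rscale_def kron_entry)
    finally show ?thesis
      using assms(2) by simp
  next
    case False
    then show ?thesis
      using assms(1) by (auto simp: sum_fun_apply cscale_def sqmatsD intro!: sum.neutral)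
  qed
qed

text \<open>Over \<open>\<real>\<close>, Kronecker products of independent families of complex matrices need not be
  independent (take \<open>BU = BV = {1, \<i>}\<close> for \<open>1 \<times> 1\<close> matrices); this is excluded by requiring the
  \<open>(a, b)\<close> entries of all elements of \<open>BU\<close> to lie on a common real line \<open>\<real> w\<^sub>a\<^sub>b\<close>.\<close>

lemma kron_products_scalars_zero:
  assumes BU: "finite BU" "rspace.independent BU"
    and real_line: "\<And>x. x \<in> BU \<Longrightarrow> \<exists>\<rho>. \<forall>a b. x a b = complex_of_real (\<rho> a b) * w a b"
    and BV: "finite BV" "rspace.independent BV" "BV \<subseteq> sqmats M"
    and sum_zero: "(\<Sum>p\<in>BU \<times> BV. rscale (c p) (kron M (fst p) (snd p))) = 0"
    and p: "p \<in> BU \<times> BV"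
  shows "c p = 0"
proof -
  obtain \<rho> where \<rho>: "\<And>x a b. x \<in> BU \<Longrightarrow> x a b = complex_of_real (\<rho> x a b) * w a b"
    using real_line by metis
  have column_zero: "(\<Sum>x\<in>BU. complex_of_real (c (x, y)) * x a b) = 0" if "y \<in> BV" for a b y
  proof -
    define e where "e y = (\<Sum>x\<in>BU. c (x, y) * \<rho> x a b)" for y
    have "cscale (w a b) (\<Sum>y\<in>BV. rscale (e y) y)
        = (\<Sum>y\<in>BV. cscale (\<Sum>x\<in>BU. complex_of_real (c (x, y)) * x a b) y)"
      by (simp add: fun_eq_iff sum_fun_apply cscale_def rscale_def \<rho> e_def sum_distrib_left
          sum_distrib_right mult_ac)
    also have "\<dots> = 0"
      by (rule kron_combination_zero_blocks[OF BV(3) sum_zero])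
    finally have slice: "cscale (w a b) (\<Sum>y\<in>BV. rscale (e y) y) = 0" .
    have "w a b = 0 \<or> e y = 0"
    proof (cases "w a b = 0")
      case False
      then have "(\<Sum>y\<in>BV. rscale (e y) y) = cscale (1 / w a b) (cscale (w a b) (\<Sum>y\<in>BV. rscale (e y) y))"
        by (simp add: cscale_def)
      also have "\<dots> = 0"
        unfolding slice by (simp add: cscale_def fun_eq_iff)
      finally have "(\<Sum>y\<in>BV. rscale (e y) y) = 0" .
      then show ?thesis
        using independent_scalars_zero BV(1,2) that by blast
    qed simp
    moreover have "(\<Sum>x\<in>BU. complex_of_real (c (x, y)) * x a b) = complex_of_real (e y) * w a b"
      by (simp add: \<rho> e_def sum_distrib_right mult.assoc)
    ultimately show ?thesis
      by auto
  qed
  obtain x y where xy: "p = (x, y)" "x \<in> BU" "y \<in> BV"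
    using p by blast
  have "(\<Sum>x\<in>BU. rscale (c (x, y)) x) = 0"
    using column_zero[OF xy(3)] by (simp add: fun_eq_iff sum_fun_apply rscale_def)
  then show ?thesis
    using independent_scalars_zero[OF BU, of "\<lambda>x. c (x, y)"] xy by simp
qed

lemma cscale_kron_in_defect_space:
  assumes "V \<in> sqmats M" "X \<in> defect_space N U" "Y \<in> defect_space M V"
  shows "cscale \<i> (kron M X Y) \<in> defect_space (N * M) (kron M U V)"
proof -
  obtain R where R: "X = had (\<lambda>i j. \<i> * complex_of_real (R i j)) U"
    and anti_R: "antihermitian (mmult N X (adj U))"
    using assms(2) by (auto simp: defect_space_def)
  obtain R' where R': "Y = had (\<lambda>i j. \<i> * complex_of_real (R' i j)) V"
    and anti_R': "antihermitian (mmult M Y (adj V))"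
    using assms(3) by (auto simp: defect_space_def)
  define R'' where "R'' a b = - (R (a div M) (b div M) * R' (a mod M) (b mod M))" for a b
  have "cscale \<i> (kron M X Y) = had (\<lambda>i j. \<i> * complex_of_real (R'' i j)) (kron M U V)"
    by (simp add: R R' R''_def fun_eq_iff kron_def had_def cscale_def algebra_simps)
  moreover have "Y \<in> sqmats M"
    using assms(1,3) defect_space_subset_sqmats by blast
  then have product: "mmult (N * M) (cscale \<i> (kron M X Y)) (adj (kron M U V))
      = cscale \<i> (kron M (mmult N X (adj U)) (mmult M Y (adj V)))"
    using assms(1) by (simp add: mmult_cscale_left kron_adj kron_mmult adj_sqmats)
  have "antihermitian (mmult (N * M) (cscale \<i> (kron M X Y)) (adj (kron M U V)))"
    using anti_R anti_R' unfolding product unfolding antihermitian_def adj_cscale kron_adj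
    by (simp add: fun_eq_iff kron_def cscale_def)
  ultimately show ?thesis
    unfolding defect_space_def by auto
qed

lemma defect_kron:
  assumes "U \<in> sqmats N" "V \<in> sqmats M"
  shows "defect N U * defect M V \<le> defect (N * M) (kron M U V)"
proof -
  obtain BU where BU: "finite BU" "BU \<subseteq> defect_space N U" "rspace.independent BU"
      "card BU = defect N U"
    using finite_basis_in_sqmats[OF defect_space_subset_sqmats[OF assms(1)]]
    unfolding defect_eq_dim by metis
  obtain BV where BV: "finite BV" "BV \<subseteq> defect_space M V" "rspace.independent BV"
      "card BV = defect M V"
    using finite_basis_in_sqmats[OF defect_space_subset_sqmats[OF assms(2)]]
    unfolding defect_eq_dim by metis
  define \<phi> where "\<phi> p = cscale \<i> (kron M (fst p) (snd p))" for p
  have real_line: "\<exists>\<rho>. \<forall>a b. x a b = complex_of_real (\<rho> a b) * (\<i> * U a b)" if x: "x \<in> BU" for x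
  proof -
    obtain R where "x = had (\<lambda>i j. \<i> * complex_of_real (R i j)) U"
      using x BU(2) unfolding defect_space_def by blast
    then show ?thesis
      by (intro exI[of _ R]) (simp add: had_def)
  qed
  have "BV \<subseteq> sqmats M"
    using BV(2) defect_space_subset_sqmats[OF assms(2)] by blast
  have "c p = 0" if sum_zero: "(\<Sum>q\<in>BU \<times> BV. rscale (c q) (\<phi> q)) = 0" and "p \<in> BU \<times> BV"
    for c p
  proof -
    have "rscale r (cscale \<i> X) = cscale \<i> (rscale r X)" for r X
      by (simp add: rscale_def cscale_def fun_eq_iff mult.left_commute)
    then have "cscale \<i> (\<Sum>q\<in>BU \<times> BV. rscale (c q) (kron M (fst q) (snd q))) = 0"
      using sum_zero by (simp add: \<phi>_def cspace.scale_sum_right)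
    then have "(\<Sum>q\<in>BU \<times> BV. rscale (c q) (kron M (fst q) (snd q))) = 0"
      by (simp add: cscale_def fun_eq_iff)
    then show ?thesis
      using kron_products_scalars_zero[OF BU(1,3) real_line BV(1,3) \<open>BV \<subseteq> sqmats M\<close>]
        \<open>p \<in> BU \<times> BV\<close> by blast
  qed
  then have "inj_on \<phi> (BU \<times> BV)" "rspace.independent (\<phi> ` (BU \<times> BV))"
    using independent_image_if_scalars_zero[of "BU \<times> BV" \<phi>] BU(1) BV(1) by auto
  moreover have "\<phi> ` (BU \<times> BV) \<subseteq> defect_space (N * M) (kron M U V)"
    using BU(2) BV(2) assms(2) by (auto simp: \<phi>_def intro!: cscale_kron_in_defect_space)
  ultimately have "card (BU \<times> BV) \<le> defect (N * M) (kron M U V)"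
    using card_le_dim_in_sqmats[OF defect_space_subset_sqmats[OF kron_sqmats[OF assms]]]
    unfolding defect_eq_dim by (metis card_image)
  then show ?thesis
    using BU(4) BV(4) by (simp add: card_cartesian_product)
qed

subsection \<open>Several factors\<close>

lemma ksize_zip: "length Fs = length ps \<Longrightarrow> ksize (zip (map fst ps) Fs) = ksize ps"
  by (induction ps arbitrary: Fs) (auto simp: length_Suc_conv)

lemma unitary_idm_1: "unitary 1 (idm 1)" "no_zero_entries 1 (idm 1)"
  by (auto simp: unitary_def sqmats_def mmult_def idm_def adj_def fun_eq_iff no_zero_entries_def)

lemma idm_1_in_V1: "idm 1 \<in> V1 1 (idm 1)"
  unfolding V1_iff[OF unitary_idm_1]
  by (simp add: sqmats_def CW_def DW_def mmult_def idm_def adj_def had_def cconj_def fun_eq_iff)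

lemma unitary_kmat:
  assumes "list_all (\<lambda>p. unitary (fst p) (snd p) \<and> no_zero_entries (fst p) (snd p)) ps"
  shows "unitary (ksize ps) (kmat ps)" "no_zero_entries (ksize ps) (kmat ps)"
  using assms unitary_idm_1
  by (induction ps) (simp_all add: unitary_kron no_zero_entries_kron)

lemma kmat_in_V1:
  assumes "list_all (\<lambda>p. unitary (fst p) (snd p) \<and> no_zero_entries (fst p) (snd p)) ps"
    and "list_all2 (\<lambda>p F. F \<in> V1 (fst p) (snd p)) ps Fs"
  shows "kmat (zip (map fst ps) Fs) \<in> V1 (ksize ps) (kmat ps)"
  using assms
proof (induction ps arbitrary: Fs)
  case Nil
  then show ?case
    using idm_1_in_V1 by simp
next
  case (Cons p ps)
  then obtain F Fs' where "Fs = F # Fs'" "F \<in> V1 (fst p) (snd p)"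
      "list_all2 (\<lambda>p F. F \<in> V1 (fst p) (snd p)) ps Fs'"
    by (auto simp: list_all2_Cons1)
  with Cons show ?case
    using kron_in_V1[of "fst p" "snd p" "ksize ps" "kmat ps"] unitary_kmat
    by (simp add: ksize_zip list_all2_lengthD)
qed

lemma kmat_ImV1_entries:
  assumes "list_all2 (\<lambda>p F. F \<in> ImV1 (fst p) (snd p)) ps Fs"
  shows "(if even (length ps) then Im else Re) (kmat (zip (map fst ps) Fs) i j) = 0"
  using assms
proof (induction ps arbitrary: Fs i j)
  case Nil
  then show ?case
    by (simp add: idm_def)
next
  case (Cons p ps)
  then obtain F Fs' where "Fs = F # Fs'" "F \<in> ImV1 (fst p) (snd p)"
      "list_all2 (\<lambda>p F. F \<in> ImV1 (fst p) (snd p)) ps Fs'"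
    by (auto simp: list_all2_Cons1)
  with Cons.IH show ?case
    by (auto simp: kron_def ImV1_def split: if_splits)
qed

lemma span_kmat_subset_V1:
  assumes "list_all (\<lambda>p. unitary (fst p) (snd p) \<and> no_zero_entries (fst p) (snd p)) ps"
  shows "cspace.span {kmat (zip (map fst ps) Fs) | Fs. list_all2 (\<lambda>p F. F \<in> V1 (fst p) (snd p)) ps Fs}
    \<subseteq> V1 (ksize ps) (kmat ps)"
  using assms unitary_kmat[OF assms]
  by (intro cspace.span_minimal) (auto intro: kmat_in_V1 subspace_V1)

lemma span_kmat_subset_ImV1:
  assumes "list_all (\<lambda>p. unitary (fst p) (snd p) \<and> no_zero_entries (fst p) (snd p)) ps"
  shows "cscale (if even (length ps) then \<i> else 1) ` rspace.span
      {kmat (zip (map fst ps) Fs) | Fs. list_all2 (\<lambda>p F. F \<in> ImV1 (fst p) (snd p)) ps Fs}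
    \<subseteq> ImV1 (ksize ps) (kmat ps)"
proof (intro span_in_ImV1 unitary_kmat assms)
  fix X assume "X \<in> {kmat (zip (map fst ps) Fs) | Fs. list_all2 (\<lambda>p F. F \<in> ImV1 (fst p) (snd p)) ps Fs}"
  then obtain Fs where X: "X = kmat (zip (map fst ps) Fs)"
    and Fs: "list_all2 (\<lambda>p F. F \<in> ImV1 (fst p) (snd p)) ps Fs"
    by blast
  have "list_all2 (\<lambda>p F. F \<in> V1 (fst p) (snd p)) ps Fs"
    using Fs by (rule list_all2_mono) (simp add: ImV1_def)
  then have "X \<in> V1 (ksize ps) (kmat ps)"
    using X kmat_in_V1[OF assms] by simp
  moreover have "Re ((if even (length ps) then \<i> else 1) * X i j) = 0" for i j
    using kmat_ImV1_entries[OF Fs, of i j] X by (simp split: if_splits)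
  ultimately show "X \<in> V1 (ksize ps) (kmat ps)
      \<and> (\<forall>i j. Re ((if even (length ps) then \<i> else 1) * X i j) = 0)"
    by blast
qed

lemma one_le_defect_idm_1: "1 \<le> defect 1 (idm 1)"
proof -
  have "idm 1 \<in> sqmats 1"
    by (simp add: idm_def sqmats_def)
  moreover have "cscale \<i> (idm 1) \<in> defect_space 1 (idm 1)"
    unfolding defect_space_def
    by (rule CollectI, rule exI[of _ "\<lambda>_ _. 1"])
      (simp add: antihermitian_def mmult_def idm_def adj_def had_def cscale_def fun_eq_iff)
  moreover have "cscale \<i> (idm 1) \<noteq> 0"
    by (simp add: cscale_def idm_def fun_eq_iff)
  ultimately have "card {cscale \<i> (idm 1)} \<le> rspace.dim (defect_space 1 (idm 1))"
    by (intro card_le_dim_in_sqmats[OF defect_space_subset_sqmats]) auto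
  then show ?thesis
    by (simp add: defect_eq_dim)
qed

lemma kmat_sqmats: "list_all (\<lambda>p. snd p \<in> sqmats (fst p)) ps \<Longrightarrow> kmat ps \<in> sqmats (ksize ps)"
proof (induction ps)
  case Nil
  then show ?case
    by (simp add: idm_def sqmats_def)
qed (simp add: kron_sqmats)

lemma prod_defect_le_defect_kmat:
  assumes "list_all (\<lambda>p. snd p \<in> sqmats (fst p)) ps"
  shows "(\<Prod>k<length ps. defect (fst (ps ! k)) (snd (ps ! k))) \<le> defect (ksize ps) (kmat ps)"
  using assms
proof (induction ps)
  case Nil
  show ?case
    using one_le_defect_idm_1 by simp
next
  case (Cons p ps)
  have "(\<Prod>k<length (p # ps). defect (fst ((p # ps) ! k)) (snd ((p # ps) ! k)))
      = defect (fst p) (snd p) * (\<Prod>k<length ps. defect (fst (ps ! k)) (snd (ps ! k)))"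
    unfolding length_Cons prod.lessThan_Suc_shift by simp
  also have "\<dots> \<le> defect (fst p) (snd p) * defect (ksize ps) (kmat ps)"
    using Cons by simp
  also have "\<dots> \<le> defect (ksize (p # ps)) (kmat (p # ps))"
    using Cons.prems defect_kron kmat_sqmats by simp
  finally show ?case .
qed

theorem corollary3p14:
  shows
  "(\<forall>N M U V. unitary N U \<and> no_zero_entries N U \<and> unitary M V \<and> no_zero_entries M V \<longrightarrow>
      module.span cscale {kron M F G | F G. F \<in> V1 N U \<and> G \<in> V1 M V}
        \<subseteq> V1 (N * M) (kron M U V)
    \<and> cscale \<i> ` module.span rscale {kron M F G | F G. F \<in> ImV1 N U \<and> G \<in> ImV1 M V}
        \<subseteq> ImV1 (N * M) (kron M U V)
    \<and> defect N U * defect M V \<le> defect (N * M) (kron M U V))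
  \<and> (\<forall>ps :: (nat \<times> cmat) list. 2 \<le> length ps \<and>
        (\<forall>k<length ps. unitary (fst (ps ! k)) (snd (ps ! k))
                      \<and> no_zero_entries (fst (ps ! k)) (snd (ps ! k))) \<longrightarrow>
      module.span cscale {kmat (zip (map fst ps) Fs) | Fs.
          length Fs = length ps \<and> (\<forall>k<length ps. Fs ! k \<in> V1 (fst (ps ! k)) (snd (ps ! k)))}
        \<subseteq> V1 (ksize ps) (kmat ps)
    \<and> cscale (if even (length ps) then \<i> else 1) ` module.span rscale {kmat (zip (map fst ps) Fs) | Fs.
          length Fs = length ps \<and> (\<forall>k<length ps. Fs ! k \<in> ImV1 (fst (ps ! k)) (snd (ps ! k)))}
        \<subseteq> ImV1 (ksize ps) (kmat ps)
    \<and> (\<Prod>k<length ps. defect (fst (ps ! k)) (snd (ps ! k))) \<le> defect (ksize ps) (kmat ps))"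
proof (intro conjI allI impI)
  fix N M U V
  assume "unitary N U \<and> no_zero_entries N U \<and> unitary M V \<and> no_zero_entries M V"
  then have factors: "unitary N U" "no_zero_entries N U" "unitary M V" "no_zero_entries M V"
    by auto
  show "cspace.span {kron M F G | F G. F \<in> V1 N U \<and> G \<in> V1 M V} \<subseteq> V1 (N * M) (kron M U V)"
    by (rule span_kron_subset_V1[OF factors])
  show "cscale \<i> ` rspace.span {kron M F G | F G. F \<in> ImV1 N U \<and> G \<in> ImV1 M V}
      \<subseteq> ImV1 (N * M) (kron M U V)"
    by (rule span_kron_subset_ImV1[OF factors])
  show "defect N U * defect M V \<le> defect (N * M) (kron M U V)"
    using factors by (intro defect_kron) (simp_all add: unitary_def)
next
  fix ps :: "(nat \<times> cmat) list"
  assume "2 \<le> length ps \<and> (\<forall>k<length ps. unitary (fst (ps ! k)) (snd (ps ! k))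
      \<and> no_zero_entries (fst (ps ! k)) (snd (ps ! k)))"
  then have factors: "list_all (\<lambda>p. unitary (fst p) (snd p) \<and> no_zero_entries (fst p) (snd p)) ps"
    by (simp add: list_all_length)
  have list_all2_iff: "list_all2 P ps Fs \<longleftrightarrow> length Fs = length ps \<and> (\<forall>k<length ps. P (ps ! k) (Fs ! k))"
    for P and Fs :: "cmat list"
    by (auto simp: list_all2_conv_all_nth)
  show "cspace.span {kmat (zip (map fst ps) Fs) | Fs.
        length Fs = length ps \<and> (\<forall>k<length ps. Fs ! k \<in> V1 (fst (ps ! k)) (snd (ps ! k)))}
      \<subseteq> V1 (ksize ps) (kmat ps)"
    using span_kmat_subset_V1[OF factors] unfolding list_all2_iff .
  show "cscale (if even (length ps) then \<i> else 1) ` rspace.span {kmat (zip (map fst ps) Fs) | Fs.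
        length Fs = length ps \<and> (\<forall>k<length ps. Fs ! k \<in> ImV1 (fst (ps ! k)) (snd (ps ! k)))}
      \<subseteq> ImV1 (ksize ps) (kmat ps)"
    using span_kmat_subset_ImV1[OF factors] unfolding list_all2_iff .
  show "(\<Prod>k<length ps. defect (fst (ps ! k)) (snd (ps ! k))) \<le> defect (ksize ps) (kmat ps)"
    using factors by (intro prod_defect_le_defect_kmat) (auto simp: list_all_iff unitary_def)
qed

end
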